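(* Let $N \ge 1$ and let $-1 \le \tau_0 < \tau_1 < \cdots < \tau_N \le 1$ be distinct points. Let $x$ be continuously differentiable on $[-1,+1]$ and let $x^N \in \mathcal{P}_N$ be the unique polynomial with $x^N(\tau_k) = x(\tau_k)$ for $0 \le k \le N$. Then \[ \|\dot{x}-\dot{x}^N\| \le (1+2N^2)\inf_{q\in\mathcal{P}_N}\|\dot{x}-\dot{q}\| + N^2(1+\Lambda_N)\inf_{p\in\mathcal{P}_N}\|x-p\|, \] where $\Lambda_N$ is the Lebesgue constant of the point set $\{\tau_0,\dots,\tau_N\}$.
   Context: $\mathcal{P}_N$ denotes the space of real polynomials of degree at most $N$, and $\|\cdot\|$ denotes the sup-norm on $[-1,+1]$. A dot denotes differentiation. For a point set $\{\tau_0,\dots,\tau_N\}$ the Lagrange polynomials are $L_i(\tau)=\prod_{j=0,\,j\ne i}^N \frac{\tau-\tau_j}{\tau_i-\tau_j}$, $0\le i\le N$, and the Lebesgue constant is $\Lambda_N=\max\{\sum_{j=0}^N |L_j(\tau)| : \tau\in[-1,1]\}$. *)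

theory Defs
  imports "HOL-Analysis.Analysis" "HOL-Computational_Algebra.Polynomial"
begin

definition supnorm :: "(real \<Rightarrow> real) \<Rightarrow> real" where
  "supnorm f = (SUP t\<in>{-1..1}. \<bar>f t\<bar>)"

definition lagrange_basis :: "(nat \<Rightarrow> real) \<Rightarrow> nat \<Rightarrow> nat \<Rightarrow> real \<Rightarrow> real" where
  "lagrange_basis \<tau> N i t = (\<Prod>j\<in>{0..N} - {i}. (t - \<tau> j) / (\<tau> i - \<tau> j))"

definition lebesgue_const :: "(nat \<Rightarrow> real) \<Rightarrow> nat \<Rightarrow> real" where
  "lebesgue_const \<tau> N = (SUP t\<in>{-1..1}. (\<Sum>j\<in>{0..N}. \<bar>lagrange_basis \<tau> N j t\<bar>))"

end

theory Submission
  imports Defs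
begin

text \<open>Shift an arbitrary \<open>q \<in> P\<^sub>N\<close> by a constant so that it agrees with \<open>x\<close> at \<open>0\<close>; by the
  mean value theorem \<open>\<parallel>x - q\<parallel> \<le> \<parallel>x' - q'\<parallel>\<close>. For any \<open>p \<in> P\<^sub>N\<close> the polynomial \<open>r = q - x\<^sup>N\<close>
  then satisfies \<open>\<parallel>r\<parallel> \<le> \<parallel>x - q\<parallel> + \<parallel>x - p\<parallel> + \<parallel>x\<^sup>N - p\<parallel> \<le> \<parallel>x' - q'\<parallel> + (1 + \<Lambda>\<^sub>N) \<parallel>x - p\<parallel>\<close>,
  because \<open>x\<^sup>N - p\<close> interpolates \<open>x - p\<close>. Markov's inequality \<open>\<parallel>r'\<parallel> \<le> N\<^sup>2 \<parallel>r\<parallel>\<close> and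
  \<open>x' - x\<^sup>N' = (x' - q') + r'\<close> give the estimate, and taking infima over \<open>q\<close> and \<open>p\<close> finishes.

  Markov's inequality is proved classically: Bernstein's inequality
  \<open>\<surd>(1 - a\<^sup>2) \<bar>p'(a)\<bar> \<le> n \<parallel>p\<parallel>\<close> handles the points away from \<open>\<plusminus>1\<close>, and near the endpoints
  Lagrange interpolation of \<open>p'\<close> at the zeros of the Chebyshev polynomial \<open>T\<^sub>n\<close> reduces
  the bound to \<open>T\<^sub>n'(1) = n\<^sup>2\<close>. Bernstein's inequality itself is the same interpolation
  argument applied to \<open>(p(cos (\<alpha> + \<phi>)) - p(cos (\<alpha> - \<phi>))) / sin \<phi>\<close>, a polynomial in
  \<open>cos \<phi>\<close> of degree \<open>< n\<close> whose value at \<open>\<phi> = 0\<close> is \<open>-2 sin \<alpha> p'(cos \<alpha>)\<close>.\<close>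

section \<open>Lagrange interpolation\<close>

lemma poly_eq_lagrange_sum:
  fixes r :: "real poly" and I :: "'a set" and \<tau> :: "'a \<Rightarrow> real"
  assumes fin: "finite I" and inj: "inj_on \<tau> I" and deg: "degree r < card I"
  shows "poly r t = (\<Sum>j\<in>I. poly r (\<tau> j) * (\<Prod>i\<in>I-{j}. (t - \<tau> i) / (\<tau> j - \<tau> i)))"
proof -
  define L where "L j = (\<Prod>i\<in>I-{j}. smult (1 / (\<tau> j - \<tau> i)) [:-\<tau> i, 1:])" for j
  define S where "S = (\<Sum>j\<in>I. smult (poly r (\<tau> j)) (L j))"
  have poly_L: "poly (L j) t = (\<Prod>i\<in>I-{j}. (t - \<tau> i) / (\<tau> j - \<tau> i))" for j t
    unfolding L_def poly_prod by (intro prod.cong) (auto simp: diff_divide_distrib)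
  have degree_L: "degree (L j) \<le> card I - 1" if "j \<in> I" for j
  proof -
    have "degree (L j) \<le> (\<Sum>i\<in>I-{j}. degree (smult (1 / (\<tau> j - \<tau> i)) [:-\<tau> i, 1:]))"
      unfolding L_def by (rule degree_prod_sum_le[unfolded o_def]) (use fin in simp)
    also have "\<dots> \<le> (\<Sum>i\<in>I-{j}. 1)"
      by (intro sum_mono) (auto simp: degree_smult_le)
    also have "\<dots> = card I - 1" using that fin by simp
    finally show ?thesis .
  qed
  have "degree S \<le> card I - 1" unfolding S_def
    by (intro degree_sum_le fin) (use degree_L degree_smult_le order_trans in blast)
  with deg have degree_S: "degree S < card I" by linarith
  have S_at_node: "poly S (\<tau> k) = poly r (\<tau> k)" if k: "k \<in> I" for k
  proof -
    have "poly (L j) (\<tau> k) = 0" if "j \<in> I" "j \<noteq> k" for j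
      unfolding poly_L using that k fin by (intro prod_zero) auto
    moreover have "poly (L k) (\<tau> k) = 1"
      unfolding poly_L using k inj by (intro prod.neutral) (auto simp: inj_on_def)
    ultimately show ?thesis
      unfolding S_def poly_sum using fin k
      by (subst sum.remove[of _ k]) (auto intro!: sum.neutral)
  qed
  have "r = S"
    by (rule poly_eqI_degree[where A="\<tau> ` I"])
       (use S_at_node inj deg degree_S in \<open>auto simp: card_image\<close>)
  then have "poly r t = poly S t" by simp
  then show ?thesis by (simp add: S_def poly_sum poly_L)
qed

section \<open>Chebyshev polynomials and nodes\<close>

fun chebyshev :: "nat \<Rightarrow> real poly" where
  "chebyshev 0 = 1"
| "chebyshev (Suc 0) = [:0, 1:]"
| "chebyshev (Suc (Suc n)) = [:0, 2:] * chebyshev (Suc n) - chebyshev n"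

lemma poly_chebyshev_cos: "poly (chebyshev n) (cos \<theta>) = cos (real n * \<theta>)"
proof (induction n rule: chebyshev.induct)
  case (3 n)
  have "cos (real (Suc (Suc n)) * \<theta>) + cos (real n * \<theta>) = 2 * cos \<theta> * cos (real (Suc n) * \<theta>)"
    using cos_add[of "real (Suc n) * \<theta>" \<theta>] cos_diff[of "real (Suc n) * \<theta>" \<theta>]
    by (simp add: algebra_simps)
  with 3 show ?case by simp
qed auto

lemma degree_chebyshev_le: "degree (chebyshev n) \<le> n"
proof (induction n rule: chebyshev.induct)
  case (3 n)
  have "degree ([:0, 2:] * chebyshev (Suc n)) \<le> Suc (Suc n)"
    using degree_mult_le[of "[:0, 2:]" "chebyshev (Suc n)"] 3(1) by simp
  with 3(2) show ?case by (simp add: degree_diff_le)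
qed auto

lemma coeff_chebyshev_Suc: "coeff (chebyshev (Suc n)) (Suc n) = 2 ^ n"
proof (induction n rule: nat_less_induct)
  case (1 n)
  show ?case
  proof (cases n)
    case (Suc m)
    have "coeff (chebyshev m) (Suc (Suc m)) = 0"
      using degree_chebyshev_le[of m] by (intro coeff_eq_0) simp
    with 1 Suc show ?thesis by simp
  qed simp
qed

lemma poly_chebyshev_1: "poly (chebyshev n) 1 = 1"
  using poly_chebyshev_cos[of n 0] by simp

lemma poly_pderiv_chebyshev_1: "poly (pderiv (chebyshev n)) 1 = real n ^ 2"
  by (induction n rule: chebyshev.induct)
     (simp_all add: pderiv_mult pderiv_pCons pderiv_diff pderiv_smult poly_chebyshev_1
        power2_eq_square algebra_simps)

lemma poly_pderiv_chebyshev_cos: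
  "poly (pderiv (chebyshev n)) (cos \<theta>) * sin \<theta> = real n * sin (real n * \<theta>)"
proof -
  have "((\<lambda>\<theta>. poly (chebyshev n) (cos \<theta>)) has_real_derivative
          poly (pderiv (chebyshev n)) (cos \<theta>) * - sin \<theta>) (at \<theta>)"
    by (rule DERIV_chain2[OF poly_DERIV DERIV_cos])
  moreover have "((\<lambda>\<theta>. cos (real n * \<theta>)) has_real_derivative - sin (real n * \<theta>) * real n) (at \<theta>)"
    by (auto intro!: derivative_eq_intros)
  ultimately have "poly (pderiv (chebyshev n)) (cos \<theta>) * - sin \<theta> = - sin (real n * \<theta>) * real n"
    unfolding poly_chebyshev_cos by (rule DERIV_unique)
  then show ?thesis by simp
qed

definition chebyshev_angle :: "nat \<Rightarrow> nat \<Rightarrow> real" where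
  "chebyshev_angle n j = real (2 * j + 1) * pi / (2 * real n)"

definition chebyshev_node :: "nat \<Rightarrow> nat \<Rightarrow> real" where
  "chebyshev_node n j = cos (chebyshev_angle n j)"

lemma chebyshev_angle_pos: "n \<ge> 1 \<Longrightarrow> 0 < chebyshev_angle n j"
  by (simp add: chebyshev_angle_def)

lemma chebyshev_angle_less_pi:
  assumes "j < n"
  shows "chebyshev_angle n j < pi"
proof -
  have "real (2 * j + 1) * pi < (2 * real n) * pi"
    using assms by (intro mult_strict_right_mono) auto
  with assms show ?thesis by (simp add: chebyshev_angle_def field_simps)
qed

lemma sin_chebyshev_angle_pos: "n \<ge> 1 \<Longrightarrow> j < n \<Longrightarrow> 0 < sin (chebyshev_angle n j)"
  by (simp add: chebyshev_angle_pos chebyshev_angle_less_pi sin_gt_zero)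

lemma chebyshev_node_less:
  assumes "j < k" "k < n"
  shows "chebyshev_node n k < chebyshev_node n j"
proof -
  have "chebyshev_angle n j < chebyshev_angle n k"
    using assms by (simp add: chebyshev_angle_def divide_strict_right_mono)
  then show ?thesis
    unfolding chebyshev_node_def using assms
    by (subst cos_mono_less_eq) (auto simp: less_imp_le chebyshev_angle_pos chebyshev_angle_less_pi)
qed

lemma inj_on_chebyshev_node: "inj_on (chebyshev_node n) {..<n}"
  by (rule inj_onI, rule ccontr) (auto dest: chebyshev_node_less simp: neq_iff)

lemma chebyshev_node_le_0: "j < n \<Longrightarrow> chebyshev_node n j \<le> chebyshev_node n 0"
  using chebyshev_node_less[of 0 j n] by (cases j) auto

lemma cos_mult_chebyshev_angle: "n \<ge> 1 \<Longrightarrow> cos (real n * chebyshev_angle n j) = 0"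
  by (auto simp: chebyshev_angle_def cos_zero_iff_int intro!: exI[of _ "int (2 * j + 1)"])

lemma abs_sin_mult_chebyshev_angle: "n \<ge> 1 \<Longrightarrow> \<bar>sin (real n * chebyshev_angle n j)\<bar> = 1"
  using sin_cos_squared_add[of "real n * chebyshev_angle n j"]
  by (simp add: cos_mult_chebyshev_angle abs_square_eq_1)

definition chebyshev_node_poly :: "nat \<Rightarrow> real poly" where
  "chebyshev_node_poly n = (\<Prod>i<n. [:- chebyshev_node n i, 1:])"

definition node_cofactor :: "nat \<Rightarrow> nat \<Rightarrow> real \<Rightarrow> real" where
  "node_cofactor n j y = (\<Prod>i\<in>{..<n}-{j}. y - chebyshev_node n i)"

lemma chebyshev_eq_smult_node_poly:
  assumes "n \<ge> 1"
  shows "chebyshev n = smult (2 ^ (n - 1)) (chebyshev_node_poly n)"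
proof (rule poly_eqI_degree_lead_coeff[where n=n and A="chebyshev_node n ` {..<n}"])
  have "degree (chebyshev_node_poly n) = n"
    unfolding chebyshev_node_poly_def by (subst degree_prod_eq_sum_degree) auto
  moreover have "lead_coeff (chebyshev_node_poly n) = 1"
    unfolding chebyshev_node_poly_def lead_coeff_prod by simp
  moreover obtain m where "n = Suc m" using assms by (cases n) auto
  ultimately show "coeff (chebyshev n) n = coeff (smult (2 ^ (n - 1)) (chebyshev_node_poly n)) n"
    and "degree (smult (2 ^ (n - 1)) (chebyshev_node_poly n)) \<le> n"
    using coeff_chebyshev_Suc[of m] by simp_all
  show "n \<le> card (chebyshev_node n ` {..<n})"
    using inj_on_chebyshev_node by (simp add: card_image)
  show "degree (chebyshev n) \<le> n" by (rule degree_chebyshev_le)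
  fix z assume "z \<in> chebyshev_node n ` {..<n}"
  then obtain j where j: "j < n" "z = chebyshev_node n j" by auto
  then have "poly (chebyshev n) z = 0"
    using poly_chebyshev_cos cos_mult_chebyshev_angle[OF assms] by (simp add: chebyshev_node_def)
  moreover have "poly (chebyshev_node_poly n) z = 0"
    unfolding chebyshev_node_poly_def poly_prod using j by (intro prod_zero) auto
  ultimately show "poly (chebyshev n) z = poly (smult (2 ^ (n - 1)) (chebyshev_node_poly n)) z"
    by simp
qed

lemma poly_pderiv_chebyshev_node_poly:
  "poly (pderiv (chebyshev_node_poly n)) y = (\<Sum>j<n. node_cofactor n j y)"
  unfolding chebyshev_node_poly_def node_cofactor_def pderiv_prod poly_sum poly_mult poly_prod
  by (simp add: pderiv_pCons)

lemma abs_node_cofactor_at_node: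
  assumes "n \<ge> 1" "j < n"
  shows "\<bar>node_cofactor n j (chebyshev_node n j)\<bar> * sin (chebyshev_angle n j) = real n / 2 ^ (n - 1)"
proof -
  have "(\<Sum>a<n. node_cofactor n a (chebyshev_node n j)) = node_cofactor n j (chebyshev_node n j)"
    using assms(2) by (subst sum.remove[of _ j]) (auto intro!: sum.neutral prod_zero simp: node_cofactor_def)
  moreover have "poly (pderiv (chebyshev n)) (chebyshev_node n j) * sin (chebyshev_angle n j)
      = real n * sin (real n * chebyshev_angle n j)"
    unfolding chebyshev_node_def by (rule poly_pderiv_chebyshev_cos)
  ultimately have "\<bar>2 ^ (n - 1) * node_cofactor n j (chebyshev_node n j) * sin (chebyshev_angle n j)\<bar> = real n"
    using abs_sin_mult_chebyshev_angle[OF assms(1)]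
    by (simp add: chebyshev_eq_smult_node_poly[OF assms(1)] pderiv_smult
        poly_pderiv_chebyshev_node_poly abs_mult)
  then show ?thesis
    using sin_chebyshev_angle_pos[OF assms] by (simp add: abs_mult field_simps)
qed

lemma sum_node_cofactor_1:
  assumes "n \<ge> 1"
  shows "(\<Sum>j<n. node_cofactor n j 1) = real n ^ 2 / 2 ^ (n - 1)"
  using poly_pderiv_chebyshev_1[of n]
  by (simp add: chebyshev_eq_smult_node_poly[OF assms] pderiv_smult poly_pderiv_chebyshev_node_poly
      field_simps)

text \<open>Interpolate at the nodes: to the right of the largest node every cofactor is nonnegative
  and increasing, and at \<open>1\<close> the cofactors sum to \<open>T\<^sub>n'(1) / 2\<^sup>n\<^sup>-\<^sup>1 = n\<^sup>2 / 2\<^sup>n\<^sup>-\<^sup>1\<close>.\<close>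
lemma abs_poly_le_beyond_chebyshev_nodes:
  fixes q :: "real poly"
  assumes n: "n \<ge> 1" and deg: "degree q < n"
    and at_nodes: "\<And>j. j < n \<Longrightarrow> \<bar>poly q (chebyshev_node n j)\<bar> * sin (chebyshev_angle n j) \<le> M"
    and x: "chebyshev_node n 0 \<le> x" "x \<le> 1"
  shows "\<bar>poly q x\<bar> \<le> real n * M"
proof -
  define c :: real where "c = 2 ^ (n - 1)"
  have "c > 0" by (simp add: c_def)
  have "0 \<le> \<bar>poly q (chebyshev_node n 0)\<bar> * sin (chebyshev_angle n 0)"
    using sin_chebyshev_angle_pos[OF n, of 0] n by simp
  with at_nodes[of 0] n have "0 \<le> M" by linarith
  have "chebyshev_node n i \<le> x" if "i < n" for i
    using chebyshev_node_le_0[OF that] x by linarith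
  then have cofactor_mono: "0 \<le> node_cofactor n j x \<and> node_cofactor n j x \<le> node_cofactor n j 1" for j
    unfolding node_cofactor_def using x by (auto intro!: prod_nonneg prod_mono)
  have "poly q x = (\<Sum>j<n. poly q (chebyshev_node n j) *
                      (node_cofactor n j x / node_cofactor n j (chebyshev_node n j)))"
    using poly_eq_lagrange_sum[of "{..<n}" "chebyshev_node n" q x] inj_on_chebyshev_node deg
    by (simp add: node_cofactor_def prod_dividef)
  also have "\<bar>\<dots>\<bar> \<le> (\<Sum>j<n. M * (c / real n) * node_cofactor n j 1)"
  proof (rule order_trans[OF sum_abs sum_mono])
    fix j assume "j \<in> {..<n}"
    then have j: "j < n" by simp
    have cofactor_node: "\<bar>node_cofactor n j (chebyshev_node n j)\<bar> = real n / (c * sin (chebyshev_angle n j))"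
      using abs_node_cofactor_at_node[OF n j] sin_chebyshev_angle_pos[OF n j]
      by (simp add: c_def field_simps)
    have "\<bar>poly q (chebyshev_node n j) * (node_cofactor n j x / node_cofactor n j (chebyshev_node n j))\<bar>
        = \<bar>poly q (chebyshev_node n j)\<bar> * node_cofactor n j x * inverse \<bar>node_cofactor n j (chebyshev_node n j)\<bar>"
      using cofactor_mono[of j] by (simp add: abs_mult divide_inverse)
    also have "\<dots> = (\<bar>poly q (chebyshev_node n j)\<bar> * sin (chebyshev_angle n j)) * (c / real n) * node_cofactor n j x"
      unfolding cofactor_node by (simp add: divide_inverse mult_ac)
    also have "\<dots> \<le> M * (c / real n) * node_cofactor n j 1"
      using at_nodes[OF j] cofactor_mono[of j] \<open>0 \<le> M\<close> \<open>c > 0\<close>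
      by (intro mult_mono) auto
    finally show "\<bar>poly q (chebyshev_node n j) * (node_cofactor n j x / node_cofactor n j (chebyshev_node n j))\<bar>
        \<le> M * (c / real n) * node_cofactor n j 1" .
  qed
  also have "\<dots> = M * (c / real n) * (real n ^ 2 / c)"
    by (simp only: sum_distrib_left[symmetric] sum_node_cofactor_1[OF n] c_def)
  also have "\<dots> = real n * M"
    using n \<open>c > 0\<close> by (simp add: power2_eq_square)
  finally show ?thesis .
qed

section \<open>Bernstein's and Markov's inequalities\<close>

lemma poly_pderiv_altdef:
  fixes p :: "real poly"
  shows "poly (pderiv p) a = (\<Sum>i\<le>degree p. coeff p i * (real i * a ^ (i - 1)))"
proof -
  have "((\<lambda>y. \<Sum>i\<le>degree p. coeff p i * y ^ i) has_real_derivative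
          (\<Sum>i\<le>degree p. coeff p i * (real i * a ^ (i - 1)))) (at a)"
    using DERIV_pow by (intro DERIV_sum DERIV_cmult) simp
  then have "(poly p has_real_derivative (\<Sum>i\<le>degree p. coeff p i * (real i * a ^ (i - 1)))) (at a)"
    by (simp add: poly_altdef[abs_def])
  with poly_DERIV show ?thesis by (rule DERIV_unique)
qed

lemma power_diff_minus_power_add:
  fixes u v :: real
  shows "(u - v) ^ m - (u + v) ^ m
    = -2 * (\<Sum>j\<le>m. real (m choose (2 * j + 1)) * v ^ (2 * j + 1) * u ^ (m - (2 * j + 1)))"
proof -
  define g where "g k = real (m choose k) * ((-1) ^ k - 1) * v ^ k * u ^ (m - k)" for k
  have "(u - v) ^ m - (u + v) ^ m = (\<Sum>k\<le>m. g k)"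
    using binomial_ring[of "-v" u m] binomial_ring[of v u m]
    by (simp add: g_def power_minus[of v] sum_subtractf algebra_simps)
  also have "\<dots> = (\<Sum>k<2 * (m + 1). g k)"
    by (rule sum.mono_neutral_left) (auto simp: g_def)
  also have "\<dots> = (\<Sum>j<m + 1. g (2 * j)) + (\<Sum>j<m + 1. g (2 * j + 1))"
    using sum_split_even_odd[of g g "m + 1"] by simp
  also have "\<dots> = (\<Sum>j\<le>m. -2 * (real (m choose (2 * j + 1)) * v ^ (2 * j + 1) * u ^ (m - (2 * j + 1))))"
    by (simp add: g_def lessThan_Suc_atMost mult_ac)
  finally show ?thesis by (simp add: sum_distrib_left)
qed

text \<open>For \<open>a = cos \<alpha>\<close>, \<open>b = sin \<alpha>\<close>, \<open>c = cos \<phi>\<close>, \<open>s = sin \<phi>\<close> the difference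
  \<open>cos (\<alpha> + \<phi>) ^ m - cos (\<alpha> - \<phi>) ^ m\<close> is odd in \<open>\<phi>\<close>, hence \<open>sin \<phi>\<close> times a polynomial in
  \<open>cos \<phi>\<close>; this is that polynomial.\<close>
definition odd_part_poly :: "real \<Rightarrow> real \<Rightarrow> nat \<Rightarrow> real poly" where
  "odd_part_poly a b m = smult (-2) (\<Sum>j\<le>m. smult (real (m choose (2 * j + 1)) * b ^ (2 * j + 1))
                            ([:0, a:] ^ (m - (2 * j + 1)) * [:1, 0, -1:] ^ j))"

lemma poly_odd_part_poly:
  "poly (odd_part_poly a b m) c
    = -2 * (\<Sum>j\<le>m. real (m choose (2 * j + 1)) * b ^ (2 * j + 1) * (a * c) ^ (m - (2 * j + 1)) * (1 - c\<^sup>2) ^ j)"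
proof -
  have "poly [:0, a:] c = a * c" "poly [:1, 0, -1:] c = 1 - c\<^sup>2"
    by (simp_all add: power2_eq_square)
  then show ?thesis
    unfolding odd_part_poly_def poly_smult poly_sum poly_mult poly_power by (simp only: mult.assoc)
qed

lemma sin_mult_odd_part_poly:
  assumes "s\<^sup>2 = 1 - c\<^sup>2"
  shows "s * poly (odd_part_poly a b m) c = (a * c - b * s) ^ m - (a * c + b * s) ^ m"
  unfolding power_diff_minus_power_add poly_odd_part_poly sum_distrib_left
proof (intro sum.cong refl)
  fix j
  have "(b * s) ^ (2 * j + 1) = b ^ (2 * j + 1) * ((s\<^sup>2) ^ j * s)"
    by (simp add: power_mult_distrib power_mult)
  then show "s * (-2 * (real (m choose (2 * j + 1)) * b ^ (2 * j + 1) * (a * c) ^ (m - (2 * j + 1))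
               * (1 - c\<^sup>2) ^ j))
      = -2 * (real (m choose (2 * j + 1)) * (b * s) ^ (2 * j + 1) * (a * c) ^ (m - (2 * j + 1)))"
    unfolding assms by (simp only: mult.assoc mult.left_commute mult.commute)
qed

lemma degree_odd_part_poly: "degree (odd_part_poly a b m) \<le> m - 1"
proof -
  have summand: "degree (smult (real (m choose (2 * j + 1)) * b ^ (2 * j + 1))
                ([:0, a:] ^ (m - (2 * j + 1)) * [:1, 0, -1:] ^ j)) \<le> m - 1" for j
  proof (cases "2 * j + 1 \<le> m")
    case True
    have "degree ([:0, a:] ^ (m - (2 * j + 1)) * [:1, 0, -1:] ^ j)
        \<le> degree ([:0, a:] ^ (m - (2 * j + 1))) + degree ([:1, 0, -1:] ^ j :: real poly)"
      by (rule degree_mult_le)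
    also have "\<dots> \<le> (m - (2 * j + 1)) * 1 + j * 2"
      by (intro add_mono order_trans[OF degree_power_le]) auto
    also have "\<dots> = m - 1" using True by simp
    finally show ?thesis using degree_smult_le order_trans by blast
  qed simp
  show ?thesis
    unfolding odd_part_poly_def
    by (intro order_trans[OF degree_smult_le] degree_sum_le finite_atMost summand)
qed

lemma poly_odd_part_poly_1: "poly (odd_part_poly a b m) 1 = -2 * real m * b * a ^ (m - 1)"
proof -
  have "(\<Sum>j\<le>m. real (m choose (2 * j + 1)) * b ^ (2 * j + 1) * a ^ (m - (2 * j + 1)) * 0 ^ j)
      = real m * b * a ^ (m - 1)"
    by (subst sum.remove[of _ 0]) (auto intro!: sum.neutral)
  then show ?thesis by (simp add: poly_odd_part_poly)
qed

lemma abs_mult_add_mult_le_1: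
  fixes a b t s :: real
  assumes "b\<^sup>2 = 1 - a\<^sup>2" "s\<^sup>2 = 1 - t\<^sup>2"
  shows "\<bar>a * t + b * s\<bar> \<le> 1" "\<bar>a * t - b * s\<bar> \<le> 1"
proof -
  have "(a * t + b * s)\<^sup>2 + (a * s - b * t)\<^sup>2 = (a\<^sup>2 + b\<^sup>2) * (t\<^sup>2 + s\<^sup>2)"
    and "(a * t - b * s)\<^sup>2 + (a * s + b * t)\<^sup>2 = (a\<^sup>2 + b\<^sup>2) * (t\<^sup>2 + s\<^sup>2)"
    by algebra+
  moreover have "(a\<^sup>2 + b\<^sup>2) * (t\<^sup>2 + s\<^sup>2) = 1"
    using assms by simp
  ultimately have "(a * t + b * s)\<^sup>2 \<le> 1" "(a * t - b * s)\<^sup>2 \<le> 1"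
    using zero_le_power2[of "a * s - b * t"] zero_le_power2[of "a * s + b * t"] by linarith+
  then show "\<bar>a * t + b * s\<bar> \<le> 1" "\<bar>a * t - b * s\<bar> \<le> 1"
    by (simp_all add: abs_square_le_1)
qed

lemma bernstein_inequality:
  fixes p :: "real poly"
  assumes n: "n \<ge> 1" and deg: "degree p \<le> n"
    and bound: "\<And>y. -1 \<le> y \<Longrightarrow> y \<le> 1 \<Longrightarrow> \<bar>poly p y\<bar> \<le> B"
    and a: "-1 \<le> a" "a \<le> 1"
  shows "sqrt (1 - a\<^sup>2) * \<bar>poly (pderiv p) a\<bar> \<le> real n * B"
proof -
  define b where "b = sqrt (1 - a\<^sup>2)"
  have "a\<^sup>2 \<le> 1" using a by (simp add: abs_square_le_1)
  then have "0 \<le> b" and b_sq: "b\<^sup>2 = 1 - a\<^sup>2" by (simp_all add: b_def)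
  define Q where "Q = (\<Sum>i\<le>degree p. smult (coeff p i) (odd_part_poly a b i))"
  have "degree Q \<le> degree p - 1"
    unfolding Q_def using degree_odd_part_poly
    by (intro degree_sum_le finite_atMost order_trans[OF degree_smult_le]
        order_trans[OF degree_odd_part_poly] diff_le_mono) auto
  with n deg have "degree Q < n" by linarith
  have sin_mult_Q: "s * poly Q c = poly p (a * c - b * s) - poly p (a * c + b * s)"
    if "s\<^sup>2 = 1 - c\<^sup>2" for s c
  proof -
    have "s * poly Q c = (\<Sum>i\<le>degree p. coeff p i * (s * poly (odd_part_poly a b i) c))"
      unfolding Q_def poly_sum poly_smult sum_distrib_left by (simp only: mult.left_commute)
    also have "\<dots> = (\<Sum>i\<le>degree p. coeff p i * ((a * c - b * s) ^ i - (a * c + b * s) ^ i))"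
      by (simp only: sin_mult_odd_part_poly[OF that])
    finally show ?thesis
      by (simp add: poly_altdef[of p] right_diff_distrib sum_subtractf)
  qed
  have "\<bar>poly Q (chebyshev_node n j)\<bar> * sin (chebyshev_angle n j) \<le> 2 * B" if j: "j < n" for j
  proof -
    let ?s = "sin (chebyshev_angle n j)" and ?c = "chebyshev_node n j"
    have st: "?s\<^sup>2 = 1 - ?c\<^sup>2" by (simp add: chebyshev_node_def sin_squared_eq)
    have "\<bar>poly Q ?c\<bar> * ?s = \<bar>poly p (a * ?c - b * ?s) - poly p (a * ?c + b * ?s)\<bar>"
      using sin_chebyshev_angle_pos[OF n j] by (simp add: abs_mult flip: sin_mult_Q[OF st])
    also have "\<dots> \<le> B + B"
      using abs_mult_add_mult_le_1[OF b_sq st]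
      by (intro order_trans[OF abs_triangle_ineq4] add_mono bound) (auto simp: abs_le_iff)
    finally show ?thesis by simp
  qed
  then have "\<bar>poly Q 1\<bar> \<le> real n * (2 * B)"
    by (intro abs_poly_le_beyond_chebyshev_nodes[OF n \<open>degree Q < n\<close>]) (auto simp: chebyshev_node_def)
  moreover have "poly Q 1 = -2 * b * poly (pderiv p) a"
    unfolding Q_def poly_sum poly_smult poly_odd_part_poly_1 poly_pderiv_altdef sum_distrib_left
    by (intro sum.cong refl) (simp add: mult_ac)
  ultimately show ?thesis
    using \<open>0 \<le> b\<close> by (simp add: abs_mult b_def)
qed

lemma inverse_le_sin_pi_div:
  assumes n: "n \<ge> 1"
  shows "1 / real n \<le> sin (pi / (2 * real n))"
proof (cases "n = 1")
  case False
  then have "real n \<ge> 2" using n by simp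
  define y where "y = pi / (2 * real n)"
  have "0 < y" using n by (simp add: y_def)
  have "y \<le> pi / 4" using \<open>real n \<ge> 2\<close> by (simp add: y_def field_simps)
  then have "y < 1" using pi_less_4 by linarith
  have "\<bar>sin y - (\<Sum>m<3. sin_coeff m * y ^ m)\<bar> \<le> inverse (fact 3) * \<bar>y\<bar> ^ 3"
    by (rule Maclaurin_sin_bound)
  then have "\<bar>sin y - y\<bar> \<le> y ^ 3 / 6"
    using \<open>0 < y\<close> by (simp add: eval_nat_numeral sin_coeff_def fact_numeral)
  then have "sin y \<ge> y - y ^ 3 / 6" by linarith
  moreover have "y ^ 3 \<le> y"
    using \<open>0 < y\<close> \<open>y < 1\<close> by (simp add: power_le_one eval_nat_numeral mult_le_one)
  ultimately have "sin y \<ge> 5 / 6 * y" by linarith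
  moreover have "y \<ge> 3 / (2 * real n)" using n pi_gt3 by (simp add: y_def field_simps)
  moreover have "3 / (2 * real n) = 3 / 2 * (1 / real n)" by simp
  moreover have "0 \<le> 1 / real n" by simp
  ultimately show ?thesis unfolding y_def[symmetric] by linarith
qed simp

lemma markov_inequality_beyond_nodes:
  fixes p :: "real poly"
  assumes n: "n \<ge> 1" and deg: "degree p \<le> n"
    and bound: "\<And>y. -1 \<le> y \<Longrightarrow> y \<le> 1 \<Longrightarrow> \<bar>poly p y\<bar> \<le> B"
    and x: "chebyshev_node n 0 \<le> x" "x \<le> 1"
  shows "\<bar>poly (pderiv p) x\<bar> \<le> real n ^ 2 * B"
proof -
  have "degree (pderiv p) < n" using deg n by (simp add: degree_pderiv)
  moreover have "\<bar>poly (pderiv p) (chebyshev_node n j)\<bar> * sin (chebyshev_angle n j) \<le> real n * B"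
    if j: "j < n" for j
  proof -
    have "sin (chebyshev_angle n j) = sqrt (1 - (chebyshev_node n j)\<^sup>2)"
      unfolding chebyshev_node_def using sin_chebyshev_angle_pos[OF n j] by (intro sin_cos_sqrt) simp
    then show ?thesis
      using bernstein_inequality[OF n deg bound, of "chebyshev_node n j"]
      by (simp add: chebyshev_node_def mult.commute)
  qed
  ultimately have "\<bar>poly (pderiv p) x\<bar> \<le> real n * (real n * B)"
    using abs_poly_le_beyond_chebyshev_nodes[OF n] x by blast
  then show ?thesis by (simp add: power2_eq_square)
qed

lemma markov_inequality:
  fixes p :: "real poly"
  assumes n: "n \<ge> 1" and deg: "degree p \<le> n"
    and bound: "\<And>y. -1 \<le> y \<Longrightarrow> y \<le> 1 \<Longrightarrow> \<bar>poly p y\<bar> \<le> B"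
    and x: "-1 \<le> x" "x \<le> 1"
  shows "\<bar>poly (pderiv p) x\<bar> \<le> real n ^ 2 * B"
proof -
  consider "chebyshev_node n 0 \<le> x" | "x \<le> - chebyshev_node n 0" | "\<bar>x\<bar> < chebyshev_node n 0"
    by linarith
  then show ?thesis
  proof cases
    case 1
    then show ?thesis using markov_inequality_beyond_nodes[OF n deg bound] x by blast
  next
    case 2
    define r where "r = pcompose p [:0, -1:]"
    have "degree r \<le> n" using deg by (simp add: r_def degree_pcompose)
    moreover have "\<bar>poly r y\<bar> \<le> B" if "-1 \<le> y" "y \<le> 1" for y
      using bound[of "-y"] that by (simp add: r_def poly_pcompose)
    ultimately have "\<bar>poly (pderiv r) (-x)\<bar> \<le> real n ^ 2 * B"
      using markov_inequality_beyond_nodes[OF n] 2 x by simp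
    then show ?thesis by (simp add: r_def pderiv_pcompose poly_pcompose pderiv_pCons)
  next
    case 3
    have "x\<^sup>2 < (chebyshev_node n 0)\<^sup>2"
      using 3 power_strict_mono[OF 3, of 2] by simp
    also have "\<dots> = 1 - (sin (pi / (2 * real n)))\<^sup>2"
      by (simp add: chebyshev_node_def chebyshev_angle_def cos_squared_eq)
    also have "\<dots> \<le> 1 - (1 / real n)\<^sup>2"
      using inverse_le_sin_pi_div[OF n] by (simp add: power_mono)
    finally have "1 / real n \<le> sqrt (1 - x\<^sup>2)"
      by (simp add: real_le_rsqrt)
    then have "1 / real n * \<bar>poly (pderiv p) x\<bar> \<le> sqrt (1 - x\<^sup>2) * \<bar>poly (pderiv p) x\<bar>"
      by (rule mult_right_mono) simp
    also have "\<dots> \<le> real n * B"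
      by (rule bernstein_inequality[OF n deg bound x])
    finally show ?thesis
      using n by (simp add: power2_eq_square field_simps)
  qed
qed

section \<open>Sup-norm estimates\<close>

lemma le_SUP_of_continuous_on_compact:
  fixes g :: "'a::topological_space \<Rightarrow> real"
  assumes "continuous_on S g" "compact S" "t \<in> S"
  shows "g t \<le> (SUP t\<in>S. g t)"
proof -
  have "bdd_above (g ` S)"
    using assms by (intro bounded_imp_bdd_above compact_imp_bounded compact_continuous_image)
  then show ?thesis using assms(3) by (rule cSUP_upper2) simp
qed

lemma abs_le_supnorm: "continuous_on {-1..1} f \<Longrightarrow> t \<in> {-1..1} \<Longrightarrow> \<bar>f t\<bar> \<le> supnorm f"
  unfolding supnorm_def by (intro le_SUP_of_continuous_on_compact continuous_intros) auto

lemma supnorm_nonneg: "continuous_on {-1..1} f \<Longrightarrow> 0 \<le> supnorm f"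
  using abs_le_supnorm[of f 0] by fastforce

lemma supnorm_le: "(\<And>t. t \<in> {-1..1} \<Longrightarrow> \<bar>f t\<bar> \<le> C) \<Longrightarrow> supnorm f \<le> C"
  unfolding supnorm_def by (intro cSUP_least) auto

lemma sum_abs_lagrange_basis_le_lebesgue_const:
  "t \<in> {-1..1} \<Longrightarrow> (\<Sum>j\<in>{0..N}. \<bar>lagrange_basis \<tau> N j t\<bar>) \<le> lebesgue_const \<tau> N"
  unfolding lebesgue_const_def lagrange_basis_def divide_inverse
  by (intro le_SUP_of_continuous_on_compact continuous_intros) auto

lemma lebesgue_const_nonneg: "0 \<le> lebesgue_const \<tau> N"
  by (rule order_trans[OF sum_nonneg sum_abs_lagrange_basis_le_lebesgue_const[of 0]]) auto

lemma poly_eq_lagrange_basis_sum: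
  fixes r :: "real poly"
  assumes "inj_on \<tau> {0..N}" "degree r \<le> N"
  shows "poly r t = (\<Sum>j\<in>{0..N}. poly r (\<tau> j) * lagrange_basis \<tau> N j t)"
  unfolding lagrange_basis_def using poly_eq_lagrange_sum[of "{0..N}" \<tau> r t] assms by simp

lemma abs_interpolant_diff_le:
  fixes xN p :: "real poly"
  assumes inj: "inj_on \<tau> {0..N}" and nodes: "\<And>k. k \<le> N \<Longrightarrow> \<tau> k \<in> {-1..1}"
    and "degree xN \<le> N" and interpolates: "\<And>k. k \<le> N \<Longrightarrow> poly xN (\<tau> k) = x (\<tau> k)"
    and "continuous_on {-1..1} x" and "degree p \<le> N" and t: "t \<in> {-1..1}"
  shows "\<bar>poly xN t - poly p t\<bar> \<le> lebesgue_const \<tau> N * supnorm (\<lambda>t. x t - poly p t)"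
proof -
  let ?E = "supnorm (\<lambda>t. x t - poly p t)"
  have cont: "continuous_on {-1..1} (\<lambda>t. x t - poly p t)"
    using assms(5) by (intro continuous_intros)
  have "degree (xN - p) \<le> N" using assms(3,6) by (simp add: degree_diff_le)
  then have "poly xN t - poly p t = (\<Sum>j\<in>{0..N}. (x (\<tau> j) - poly p (\<tau> j)) * lagrange_basis \<tau> N j t)"
    using poly_eq_lagrange_basis_sum[OF inj, of "xN - p" t] interpolates by simp
  also have "\<bar>\<dots>\<bar> \<le> (\<Sum>j\<in>{0..N}. ?E * \<bar>lagrange_basis \<tau> N j t\<bar>)"
    using abs_le_supnorm[OF cont nodes]
    by (intro order_trans[OF sum_abs sum_mono]) (simp add: abs_mult mult_right_mono)
  also have "\<dots> \<le> ?E * lebesgue_const \<tau> N"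
    unfolding sum_distrib_left[symmetric]
    by (intro mult_left_mono sum_abs_lagrange_basis_le_lebesgue_const t supnorm_nonneg cont)
  finally show ?thesis by (simp add: mult.commute)
qed

lemma abs_diff_le_supnorm_deriv:
  fixes q :: "real poly"
  assumes deriv: "\<And>t. t \<in> {-1..1} \<Longrightarrow> (x has_real_derivative x' t) (at t within {-1..1})"
    and cont: "continuous_on {-1..1} x'" and "poly q 0 = x 0" and t: "t \<in> {-1..1}"
  shows "\<bar>x t - poly q t\<bar> \<le> supnorm (\<lambda>t. x' t - poly (pderiv q) t)"
proof -
  let ?D = "supnorm (\<lambda>t. x' t - poly (pderiv q) t)"
  have cont_diff: "continuous_on {-1..1} (\<lambda>t. x' t - poly (pderiv q) t)"
    using cont by (intro continuous_intros)
  have "norm ((x t - poly q t) - (x 0 - poly q 0)) \<le> ?D * norm (t - 0)"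
  proof (rule field_differentiable_bound[where S="{-1..1}"])
    fix z :: real assume z: "z \<in> {-1..1}"
    show "((\<lambda>t. x t - poly q t) has_field_derivative (x' z - poly (pderiv q) z)) (at z within {-1..1})"
      using deriv[OF z] has_field_derivative_at_within[OF poly_DERIV] by (rule DERIV_diff)
    show "norm (x' z - poly (pderiv q) z) \<le> ?D" using abs_le_supnorm[OF cont_diff z] by simp
  qed (use t in auto)
  with assms(3) have "\<bar>x t - poly q t\<bar> \<le> ?D * \<bar>t\<bar>" by simp
  also have "\<dots> \<le> ?D"
    using t supnorm_nonneg[OF cont_diff] by (intro mult_left_le) auto
  finally show ?thesis .
qed

lemma supnorm_deriv_interpolant_le:
  fixes xN q p :: "real poly"
  assumes N: "N \<ge> 1" and inj: "inj_on \<tau> {0..N}" and nodes: "\<And>k. k \<le> N \<Longrightarrow> \<tau> k \<in> {-1..1}"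
    and deriv: "\<And>t. t \<in> {-1..1} \<Longrightarrow> (x has_real_derivative x' t) (at t within {-1..1})"
    and cont: "continuous_on {-1..1} x'"
    and deg: "degree xN \<le> N" and interpolates: "\<And>k. k \<le> N \<Longrightarrow> poly xN (\<tau> k) = x (\<tau> k)"
    and q: "degree q \<le> N" and p: "degree p \<le> N"
  shows "supnorm (\<lambda>t. x' t - poly (pderiv xN) t)
    \<le> (1 + 2 * real N ^ 2) * supnorm (\<lambda>t. x' t - poly (pderiv q) t)
      + real N ^ 2 * (1 + lebesgue_const \<tau> N) * supnorm (\<lambda>t. x t - poly p t)"
proof (rule supnorm_le)
  let ?D = "supnorm (\<lambda>t. x' t - poly (pderiv q) t)"
  let ?E = "supnorm (\<lambda>t. x t - poly p t)"
  let ?\<Lambda> = "lebesgue_const \<tau> N"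
  fix t :: real assume t: "t \<in> {-1..1}"
  have cont_x: "continuous_on {-1..1} x" by (rule DERIV_continuous_on[OF deriv])
  have cont_D: "continuous_on {-1..1} (\<lambda>t. x' t - poly (pderiv q) t)"
    using cont by (intro continuous_intros)
  have cont_E: "continuous_on {-1..1} (\<lambda>t. x t - poly p t)"
    using cont_x by (intro continuous_intros)
  define q0 where "q0 = q + [:x 0 - poly q 0:]"
  have "pderiv q0 = pderiv q" by (simp add: q0_def pderiv_add pderiv_pCons)
  have "degree (q0 - xN) \<le> N"
    using q deg by (simp add: q0_def degree_add_le degree_diff_le)
  moreover have "\<bar>poly (q0 - xN) y\<bar> \<le> ?D + (1 + ?\<Lambda>) * ?E" if "-1 \<le> y" "y \<le> 1" for y
  proof -
    from that have y: "y \<in> {-1..1}" by simp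
    have "\<bar>x y - poly q0 y\<bar> \<le> ?D"
      using abs_diff_le_supnorm_deriv[OF deriv cont _ y, of q0] \<open>pderiv q0 = pderiv q\<close>
      by (simp add: q0_def)
    moreover have "\<bar>x y - poly p y\<bar> \<le> ?E" using abs_le_supnorm[OF cont_E y] by simp
    moreover have "\<bar>poly xN y - poly p y\<bar> \<le> ?\<Lambda> * ?E"
      by (rule abs_interpolant_diff_le[OF inj nodes deg interpolates cont_x p y])
    ultimately show ?thesis by (simp add: algebra_simps)
  qed
  ultimately have markov: "\<bar>poly (pderiv (q0 - xN)) t\<bar> \<le> real N ^ 2 * (?D + (1 + ?\<Lambda>) * ?E)"
    using t by (intro markov_inequality[OF N]) auto
  have "x' t - poly (pderiv xN) t = (x' t - poly (pderiv q) t) + poly (pderiv (q0 - xN)) t"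
    using \<open>pderiv q0 = pderiv q\<close> by (simp add: pderiv_diff)
  also have "\<bar>\<dots>\<bar> \<le> ?D + real N ^ 2 * (?D + (1 + ?\<Lambda>) * ?E)"
    using abs_le_supnorm[OF cont_D t] markov by (intro order_trans[OF abs_triangle_ineq add_mono])
  also have "\<dots> \<le> (1 + 2 * real N ^ 2) * ?D + real N ^ 2 * (1 + ?\<Lambda>) * ?E"
    using supnorm_nonneg[OF cont_D] by (simp add: algebra_simps)
  finally show "\<bar>x' t - poly (pderiv xN) t\<bar> \<le> (1 + 2 * real N ^ 2) * ?D + real N ^ 2 * (1 + ?\<Lambda>) * ?E" .
qed

lemma le_weighted_INF_add:
  fixes L a b :: real
  assumes "a > 0" "b > 0" "A \<noteq> {}" "B \<noteq> {}"
    and le: "\<And>u v. u \<in> A \<Longrightarrow> v \<in> B \<Longrightarrow> L \<le> a * f u + b * g v"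
  shows "L \<le> a * (INF u\<in>A. f u) + b * (INF v\<in>B. g v)"
proof -
  have "(L - a * (INF u\<in>A. f u)) / b \<le> (INF v\<in>B. g v)"
  proof (rule cINF_greatest[OF \<open>B \<noteq> {}\<close>])
    fix v assume "v \<in> B"
    have "L - b * g v \<le> a * f u" if "u \<in> A" for u
      using le[OF that \<open>v \<in> B\<close>] by linarith
    then have "(L - b * g v) / a \<le> (INF u\<in>A. f u)"
      using \<open>a > 0\<close> by (intro cINF_greatest[OF \<open>A \<noteq> {}\<close>]) (simp add: pos_divide_le_eq mult.commute)
    then show "(L - a * (INF u\<in>A. f u)) / b \<le> g v"
      using \<open>a > 0\<close> \<open>b > 0\<close> by (simp add: pos_divide_le_eq mult.commute)
  qed
  then show ?thesis
    using \<open>b > 0\<close> by (simp add: pos_divide_le_eq mult.commute)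
qed

theorem proposition2p1:
  fixes N :: nat and \<tau> :: "nat \<Rightarrow> real" and x x' :: "real \<Rightarrow> real" and xN :: "real poly"
  assumes "N \<ge> 1"
    and "strict_mono_on {0..N} \<tau>" and "-1 \<le> \<tau> 0" and "\<tau> N \<le> 1"
    and "\<And>t. t \<in> {-1..1} \<Longrightarrow> (x has_real_derivative x' t) (at t within {-1..1})"
    and "continuous_on {-1..1} x'"
    and "degree xN \<le> N" and "\<And>k. k \<le> N \<Longrightarrow> poly xN (\<tau> k) = x (\<tau> k)"
  shows "supnorm (\<lambda>t. x' t - poly (pderiv xN) t)
     \<le> (1 + 2 * real N ^ 2) * (INF q\<in>{q :: real poly. degree q \<le> N}. supnorm (\<lambda>t. x' t - poly (pderiv q) t))
       + real N ^ 2 * (1 + lebesgue_const \<tau> N) * (INF p\<in>{p :: real poly. degree p \<le> N}. supnorm (\<lambda>t. x t - poly p t))"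
proof (rule le_weighted_INF_add)
  have inj: "inj_on \<tau> {0..N}" using assms(2) by (rule strict_mono_on_imp_inj_on)
  have nodes: "\<tau> k \<in> {-1..1}" if "k \<le> N" for k
    using strict_mono_on_leD[OF assms(2), of 0 k] strict_mono_on_leD[OF assms(2), of k N] that assms(3,4)
    by auto
  show "supnorm (\<lambda>t. x' t - poly (pderiv xN) t)
      \<le> (1 + 2 * real N ^ 2) * supnorm (\<lambda>t. x' t - poly (pderiv q) t)
        + real N ^ 2 * (1 + lebesgue_const \<tau> N) * supnorm (\<lambda>t. x t - poly p t)"
    if "q \<in> {q. degree q \<le> N}" "p \<in> {p. degree p \<le> N}" for q p
    using supnorm_deriv_interpolant_le[OF assms(1) inj nodes assms(5-8)] that by simp
  show "0 < real N ^ 2 * (1 + lebesgue_const \<tau> N)"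
    using assms(1) lebesgue_const_nonneg[of \<tau> N] by (simp add: add_pos_nonneg)
qed (auto intro: add_pos_nonneg exI[of _ 0])

end
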